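(* Let $n\ge m\ge 1$ be integers and $d\in\{l,r\}$. The algorithm $\mathrm{move}(n,m,d)$ described in the context performs only legal moves, transforms the initial configuration $b^nOw^m$ into the final configuration $w^mOb^n$, and uses exactly $nm+n+m$ moves; consequently it is optimal, i.e. no sequence of legal moves transforms the initial configuration into the final one with fewer moves.
   Context: The game: positions $1,\dots,n+m+1$ in a row, each holding a black checker ($b$), a white checker ($w$) or nothing, with exactly one empty position (the vacancy $O$). Initial configuration $b^nOw^m$, final configuration $w^mOb^n$. A legal move is a slide (a checker adjacent to the vacancy moves into it) or a jump (a checker at distance two from the vacancy jumps over the checker between them into it). Elementary operations: slide($l$): the checker immediately to the right of the vacancy slides left into it; slide($r$): the checker immediately to the left of the vacancy slides right into it; jump($l$): the checker two positions to the right of the vacancy jumps left into it; jump($r$): the checker two positions to the left of the vacancy jumps right into it; change($dir$) replaces $dir$ by the other element of $\{l,r\}$. The algorithm $\mathrm{move}(n,m,d)$: set $dir\gets d$. Stage 1: for $i=1,\dots,m$: perform jump($dir$) $i-1$ times, then slide($dir$), then change($dir$). Stage 2: perform jump($dir$) $m$ times. Stage 3: for $i=1,\dots,n-m$: perform slide($r$), then change($dir$), then jump($dir$) $m$ times. Stage 4: for $i=m,m-1,\dots,1$: perform change($dir$), then slide($dir$), then jump($dir$) $i-1$ times. *)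

theory Defs
  imports Main
begin

datatype cell = Bl | Wh | Vac

type_synonym conf = "cell list"  (* position i+1 of the paper = list index i *)

datatype dir = L | R

fun change :: "dir \<Rightarrow> dir" where
  "change L = R" | "change R = L"

datatype elop = Slide dir | Jump dir

definition init_conf :: "nat \<Rightarrow> nat \<Rightarrow> conf" where
  "init_conf n m = replicate n Bl @ [Vac] @ replicate m Wh"

definition final_conf :: "nat \<Rightarrow> nat \<Rightarrow> conf" where
  "final_conf n m = replicate m Wh @ [Vac] @ replicate n Bl"

definition legal_move :: "conf \<Rightarrow> conf \<Rightarrow> bool" where
  "legal_move c c' \<longleftrightarrow> (\<exists>p q. p < length c \<and> q < length c \<and> c ! p = Vac \<and> c ! q \<noteq> Vac \<and>
     (q = p + 1 \<or> p = q + 1 \<or>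
      ((q = p + 2 \<or> p = q + 2) \<and> c ! (min p q + 1) \<noteq> Vac)) \<and>
     c' = c[p := c ! q, q := Vac])"

fun src :: "elop \<Rightarrow> nat \<Rightarrow> int" where
  "src (Slide L) v = int v + 1"
| "src (Slide R) v = int v - 1"
| "src (Jump L) v = int v + 2"
| "src (Jump R) v = int v - 2"

definition vacancy :: "conf \<Rightarrow> nat" where
  "vacancy c = (LEAST i. i < length c \<and> c ! i = Vac)"

definition apply_op :: "elop \<Rightarrow> conf \<Rightarrow> conf option" where
  "apply_op op c = (let v = vacancy c; s = src op v in
     if 0 \<le> s \<and> s < int (length c)
     then Some (c[v := c ! nat s, nat s := Vac]) else None)"

fun run :: "elop list \<Rightarrow> conf \<Rightarrow> conf list option" where
  "run [] c = Some [c]"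
| "run (op # os) c = (case apply_op op c of None \<Rightarrow> None
                      | Some c' \<Rightarrow> map_option (Cons c) (run os c'))"

definition dir_after :: "dir \<Rightarrow> nat \<Rightarrow> dir" where
  "dir_after d k = (change ^^ k) d"

definition stage1 :: "nat \<Rightarrow> dir \<Rightarrow> elop list" where
  "stage1 m d = concat (map (\<lambda>i. replicate (i - 1) (Jump (dir_after d (i - 1)))
                                 @ [Slide (dir_after d (i - 1))]) [1..<m+1])"

definition stage2 :: "nat \<Rightarrow> dir \<Rightarrow> elop list" where
  "stage2 m d = replicate m (Jump (dir_after d m))"

definition stage3 :: "nat \<Rightarrow> nat \<Rightarrow> dir \<Rightarrow> elop list" where
  "stage3 n m d = concat (map (\<lambda>i. [Slide R] @ replicate m (Jump (dir_after d (m + i))))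
                                [1..<n-m+1])"

definition stage4 :: "nat \<Rightarrow> nat \<Rightarrow> dir \<Rightarrow> elop list" where
  "stage4 n m d = concat (map (\<lambda>i. [Slide (dir_after d (n + (m - i) + 1))]
                                   @ replicate (i - 1) (Jump (dir_after d (n + (m - i) + 1))))
                                (rev [1..<m+1]))"

definition move :: "nat \<Rightarrow> nat \<Rightarrow> dir \<Rightarrow> elop list" where
  "move n m d = stage1 m d @ stage2 m d @ stage3 n m d @ stage4 n m d"

end

theory Submission
  imports Defs
begin

text \<open>The algorithm is verified by following the configurations it passes through: at the start
  of every round the board is a block of alternating checkers between monochromatic blocks, with the
  vacancy at one end of the alternating block, and a round is a sweep of jumps across that block
  together with one slide.

  Optimality rests on a potential of the configuration \<open>xs O ys\<close>: the number of pairs of a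
  black checker left of a white one, plus a quantity \<sigma> defined as the maximum of the parity of
  \<open>|xs|\<close> + (number of white checkers) and of the scores of the black checkers having a white
  checker somewhere to their right. The score of such a black checker is the number of black
  checkers to its left plus the number of white checkers to its right, plus a parity bit depending on
  its distance to the vacancy. A jump changes the inversion count by at most one and leaves \<sigma>
  unchanged; a slide leaves the inversion count unchanged and changes \<sigma> by at most one. The
  potential of \<open>b\<^sup>nOw\<^sup>m\<close> is at least \<open>nm + n + m\<close> and that of \<open>w\<^sup>mOb\<^sup>n\<close> is 0.\<close>

section \<open>Legal runs of elementary operations\<close>

definition runs_legally :: "elop list \<Rightarrow> conf \<Rightarrow> conf \<Rightarrow> bool" where
  "runs_legally ops c c' \<longleftrightarrow>
     (\<exists>tr. run ops c = Some tr \<and> successively legal_move tr \<and> last tr = c')"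

lemma successively_iff_nth:
  "successively P xs \<longleftrightarrow> (\<forall>i. i + 1 < length xs \<longrightarrow> P (xs ! i) (xs ! (i + 1)))"
  by (induction P xs rule: successively.induct) (auto simp: nth_Cons split: nat.splits)

lemma run_Some_hd: "run ops c = Some tr \<Longrightarrow> tr \<noteq> [] \<and> hd tr = c"
  by (induction ops arbitrary: c tr) (auto split: option.splits)

lemma runs_legally_Nil [simp]: "runs_legally [] c c' \<longleftrightarrow> c = c'"
  by (simp add: runs_legally_def)

lemma runs_legally_Cons:
  "runs_legally (op # ops) c c'' \<longleftrightarrow>
     (\<exists>c'. apply_op op c = Some c' \<and> legal_move c c' \<and> runs_legally ops c' c'')"
proof -
  have "run (op # ops) c = Some tr \<longleftrightarrow>
          (\<exists>c' tr'. apply_op op c = Some c' \<and> run ops c' = Some tr' \<and> tr = c # tr')" for tr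
    by (auto split: option.splits)
  then show ?thesis
    unfolding runs_legally_def by (fastforce simp: successively_Cons dest: run_Some_hd)
qed

lemma runs_legally_append:
  "runs_legally ops c c' \<Longrightarrow> runs_legally ops' c' c'' \<Longrightarrow> runs_legally (ops @ ops') c c''"
  by (induction ops arbitrary: c) (auto simp: runs_legally_Cons)

lemma runs_legally_concat_upt:
  assumes "\<And>i. i < k \<Longrightarrow> runs_legally (f i) (C i) (C (Suc i))"
  shows "runs_legally (concat (map f [0..<k])) (C 0) (C k)"
  using assms by (induction k) (auto intro: runs_legally_append)

lemma runs_legally_concat_rev_upt:
  assumes "\<And>i. i < k \<Longrightarrow> runs_legally (f i) (C (Suc i)) (C i)"
  shows "runs_legally (concat (map f (rev [0..<k]))) (C k) (C 0)"
  using assms by (induction k) (auto intro: runs_legally_append)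

lemma vacancy_append_Vac: "Vac \<notin> set xs \<Longrightarrow> vacancy (xs @ Vac # ys) = length xs"
  unfolding vacancy_def
proof (rule Least_equality)
  fix i assume "Vac \<notin> set xs" "i < length (xs @ Vac # ys) \<and> (xs @ Vac # ys) ! i = Vac"
  then show "length xs \<le> i"
    by (metis linorder_not_le nth_append nth_mem)
qed simp

lemma apply_op_eq_Some:
  assumes "src op (vacancy c) = int s" "s < length c"
  shows "apply_op op c = Some (c[vacancy c := c ! s, s := Vac])"
  using assms by (simp add: apply_op_def Let_def)

lemma runs_legally_single:
  "apply_op op c = Some c' \<Longrightarrow> legal_move c c' \<Longrightarrow> runs_legally [op] c c'"
  by (auto simp: runs_legally_Cons)

lemma runs_legally_Slide_L:
  assumes "Vac \<notin> set xs" "a \<noteq> Vac"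
  shows "runs_legally [Slide L] (xs @ Vac # a # ys) (xs @ a # Vac # ys)"
proof (rule runs_legally_single)
  show "apply_op (Slide L) (xs @ Vac # a # ys) = Some (xs @ a # Vac # ys)"
    using apply_op_eq_Some[of "Slide L" _ "Suc (length xs)"] assms
    by (simp add: vacancy_append_Vac nth_append list_update_append)
  show "legal_move (xs @ Vac # a # ys) (xs @ a # Vac # ys)"
    unfolding legal_move_def using assms
    by (intro exI[of _ "length xs"] exI[of _ "Suc (length xs)"]) (simp add: nth_append list_update_append)
qed

lemma runs_legally_Slide_R:
  assumes "Vac \<notin> set xs" "a \<noteq> Vac"
  shows "runs_legally [Slide R] (xs @ a # Vac # ys) (xs @ Vac # a # ys)"
proof (rule runs_legally_single)
  have "vacancy (xs @ a # Vac # ys) = Suc (length xs)"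
    using vacancy_append_Vac[of "xs @ [a]" ys] assms by simp
  then show "apply_op (Slide R) (xs @ a # Vac # ys) = Some (xs @ Vac # a # ys)"
    using apply_op_eq_Some[of "Slide R" _ "length xs"] assms
    by (simp add: nth_append list_update_append)
  show "legal_move (xs @ a # Vac # ys) (xs @ Vac # a # ys)"
    unfolding legal_move_def using assms
    by (intro exI[of _ "Suc (length xs)"] exI[of _ "length xs"]) (simp add: nth_append list_update_append)
qed

lemma runs_legally_Jump_L:
  assumes "Vac \<notin> set xs" "a \<noteq> Vac" "b \<noteq> Vac"
  shows "runs_legally [Jump L] (xs @ Vac # a # b # ys) (xs @ b # a # Vac # ys)"
proof (rule runs_legally_single)
  show "apply_op (Jump L) (xs @ Vac # a # b # ys) = Some (xs @ b # a # Vac # ys)"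
    using apply_op_eq_Some[of "Jump L" _ "Suc (Suc (length xs))"] assms
    by (simp add: vacancy_append_Vac nth_append list_update_append)
  show "legal_move (xs @ Vac # a # b # ys) (xs @ b # a # Vac # ys)"
    unfolding legal_move_def using assms
    by (intro exI[of _ "length xs"] exI[of _ "Suc (Suc (length xs))"])
      (simp add: nth_append list_update_append)
qed

lemma runs_legally_Jump_R:
  assumes "Vac \<notin> set xs" "a \<noteq> Vac" "b \<noteq> Vac"
  shows "runs_legally [Jump R] (xs @ a # b # Vac # ys) (xs @ Vac # b # a # ys)"
proof (rule runs_legally_single)
  have "vacancy (xs @ a # b # Vac # ys) = Suc (Suc (length xs))"
    using vacancy_append_Vac[of "xs @ [a, b]" ys] assms by simp
  then show "apply_op (Jump R) (xs @ a # b # Vac # ys) = Some (xs @ Vac # b # a # ys)"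
    using apply_op_eq_Some[of "Jump R" _ "length xs"] assms
    by (simp add: nth_append list_update_append)
  show "legal_move (xs @ a # b # Vac # ys) (xs @ Vac # b # a # ys)"
    unfolding legal_move_def using assms
    by (intro exI[of _ "Suc (Suc (length xs))"] exI[of _ "length xs"])
      (simp add: nth_append list_update_append)
qed

definition alternating :: "'a \<Rightarrow> 'a \<Rightarrow> nat \<Rightarrow> 'a list" where
  "alternating a b k = concat (replicate k [a, b])"

lemma alternating_0 [simp]: "alternating a b 0 = []"
  by (simp add: alternating_def)

lemma alternating_Suc: "alternating a b (Suc k) = a # b # alternating a b k"
  by (simp add: alternating_def)

lemma alternating_Suc_snoc: "alternating a b (Suc k) = alternating a b k @ [a, b]"
  by (induction k) (simp_all add: alternating_def)

lemma Cons_alternating: "a # alternating b a k = alternating a b k @ [a]"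
  by (induction k) (simp_all add: alternating_Suc)

lemma Cons_alternating_append: "a # alternating b a k @ ys = alternating a b k @ a # ys"
  by (simp flip: Cons_alternating)

lemma replicate_append_alternating:
  "replicate j a @ alternating a b (Suc k) @ ys = a # replicate j a @ alternating b a k @ b # ys"
proof -
  have "replicate j a @ alternating a b (Suc k) @ ys = a # replicate j a @ (b # alternating a b k @ ys)"
    by (simp add: alternating_Suc replicate_app_Cons_same)
  then show ?thesis
    by (simp only: Cons_alternating_append)
qed

lemma Vac_notin_alternating [simp]:
  "a \<noteq> Vac \<Longrightarrow> b \<noteq> Vac \<Longrightarrow> Vac \<notin> set (alternating a b k)"
  by (auto simp: alternating_def)

lemma runs_legally_Jumps_L:
  assumes "Vac \<notin> set xs" "a \<noteq> Vac" "b \<noteq> Vac"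
  shows "runs_legally (replicate k (Jump L))
           (xs @ Vac # alternating a b k @ ys) (xs @ alternating b a k @ Vac # ys)"
  using assms(1)
proof (induction k arbitrary: xs)
  case (Suc k)
  have "runs_legally [Jump L] (xs @ Vac # alternating a b (Suc k) @ ys)
          ((xs @ [b, a]) @ Vac # alternating a b k @ ys)"
    using runs_legally_Jump_L[OF Suc.prems assms(2,3)] by (simp add: alternating_Suc)
  moreover have "runs_legally (replicate k (Jump L))
          ((xs @ [b, a]) @ Vac # alternating a b k @ ys) (xs @ alternating b a (Suc k) @ Vac # ys)"
    using Suc.IH[of "xs @ [b, a]"] Suc.prems assms by (simp add: alternating_Suc)
  ultimately show ?case
    using runs_legally_append by fastforce
qed simp

lemma runs_legally_Jumps_R:
  assumes "Vac \<notin> set xs" "a \<noteq> Vac" "b \<noteq> Vac"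
  shows "runs_legally (replicate k (Jump R))
           (xs @ alternating a b k @ Vac # ys) (xs @ Vac # alternating b a k @ ys)"
proof (induction k arbitrary: ys)
  case (Suc k)
  have "runs_legally [Jump R] (xs @ alternating a b (Suc k) @ Vac # ys)
          (xs @ alternating a b k @ Vac # b # a # ys)"
    using runs_legally_Jump_R[of "xs @ alternating a b k" a b ys] assms
    by (simp add: alternating_Suc_snoc)
  moreover have "runs_legally (replicate k (Jump R))
          (xs @ alternating a b k @ Vac # b # a # ys) (xs @ Vac # alternating b a (Suc k) @ ys)"
    using Suc.IH[of "b # a # ys"] by (simp add: alternating_Suc_snoc)
  ultimately show ?case
    using runs_legally_append by fastforce
qed simp

section \<open>Correctness of the algorithm\<close>

lemma dir_after_0 [simp]: "dir_after d 0 = d"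
  by (simp add: dir_after_def)

lemma dir_after_Suc: "dir_after d (Suc k) = change (dir_after d k)"
  by (simp add: dir_after_def)

lemma upt_1_Suc: "[1..<k + 1] = map Suc [0..<k]"
  by (simp add: map_Suc_upt)

lemma stage1_eq:
  "stage1 m d =
     concat (map (\<lambda>k. replicate k (Jump (dir_after d k)) @ [Slide (dir_after d k)]) [0..<m])"
  unfolding stage1_def upt_1_Suc map_map by (simp add: comp_def)

lemma stage3_eq:
  "stage3 n m d =
     concat (map (\<lambda>k. Slide R # replicate m (Jump (dir_after d (m + Suc k)))) [0..<n - m])"
  unfolding stage3_def upt_1_Suc map_map by (simp add: comp_def)

lemma stage4_eq:
  "stage4 n m d =
     concat (map (\<lambda>k. Slide (dir_after d (n + m - k)) # replicate k (Jump (dir_after d (n + m - k))))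
       (rev [0..<m]))"
  unfolding stage4_def upt_1_Suc map_map rev_map
  by (intro arg_cong[where f = concat] map_cong) (auto simp: Suc_diff_Suc)

text \<open>Configurations between the rounds: \<open>p\<close> and \<open>q\<close> are the sizes of the monochromatic
  blocks, \<open>k\<close> is the number of pairs in the alternating block, and the vacancy sits at the end of
  that block where a sweep in direction \<open>e\<close> starts (Stage 1) or ends (Stages 3 and 4).\<close>

definition stage1_conf :: "dir \<Rightarrow> nat \<Rightarrow> nat \<Rightarrow> nat \<Rightarrow> conf" where
  "stage1_conf e p k q = (if e = R
     then replicate p Bl @ alternating Bl Wh k @ Vac # replicate q Wh
     else replicate p Bl @ Vac # alternating Bl Wh k @ replicate q Wh)"

lemma runs_legally_stage1_round:
  "runs_legally (replicate k (Jump e) @ [Slide e])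
     (stage1_conf e (Suc p) k (Suc q)) (stage1_conf (change e) p (Suc k) q)"
proof (cases e)
  case R
  have "runs_legally (replicate k (Jump R)) (stage1_conf R (Suc p) k (Suc q))
          (replicate p Bl @ Bl # Vac # alternating Wh Bl k @ Wh # replicate q Wh)"
    using runs_legally_Jumps_R[of "Bl # replicate p Bl" Bl Wh k "Wh # replicate q Wh"]
    by (simp add: stage1_conf_def replicate_app_Cons_same)
  moreover have "runs_legally [Slide R]
          (replicate p Bl @ Bl # Vac # alternating Wh Bl k @ Wh # replicate q Wh)
          (stage1_conf L p (Suc k) q)"
    using runs_legally_Slide_R[of "replicate p Bl" Bl "alternating Wh Bl k @ Wh # replicate q Wh"]
    by (simp add: stage1_conf_def Cons_alternating_append alternating_Suc_snoc)
  ultimately show ?thesis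
    using R runs_legally_append by fastforce
next
  case L
  have "runs_legally (replicate k (Jump L)) (stage1_conf L (Suc p) k (Suc q))
          ((Bl # replicate p Bl @ alternating Wh Bl k) @ Vac # Wh # replicate q Wh)"
    using runs_legally_Jumps_L[of "Bl # replicate p Bl" Bl Wh k "Wh # replicate q Wh"]
    by (simp add: stage1_conf_def)
  moreover have "runs_legally [Slide L]
          ((Bl # replicate p Bl @ alternating Wh Bl k) @ Vac # Wh # replicate q Wh)
          (stage1_conf R p (Suc k) q)"
    using runs_legally_Slide_L[of "Bl # replicate p Bl @ alternating Wh Bl k" Wh "replicate q Wh"]
    by (simp add: stage1_conf_def replicate_append_alternating)
  ultimately show ?thesis
    using L runs_legally_append by fastforce
qed

lemma stage1_conf_init: "stage1_conf d n 0 m = init_conf n m"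
  by (simp add: stage1_conf_def init_conf_def)

lemma runs_legally_stage1:
  assumes "m \<le> n"
  shows "runs_legally (stage1 m d) (init_conf n m) (stage1_conf (dir_after d m) (n - m) m 0)"
proof -
  let ?C = "\<lambda>k. stage1_conf (dir_after d k) (n - k) k (m - k)"
  have "runs_legally (stage1 m d) (?C 0) (?C m)"
    unfolding stage1_eq
  proof (rule runs_legally_concat_upt)
    fix k assume "k < m"
    then show "runs_legally (replicate k (Jump (dir_after d k)) @ [Slide (dir_after d k)])
                 (?C k) (?C (Suc k))"
      using runs_legally_stage1_round[of k "dir_after d k" "n - Suc k" "m - Suc k"] assms
      by (simp add: Suc_diff_Suc dir_after_Suc)
  qed
  then show ?thesis
    by (simp add: stage1_conf_init)
qed

definition stage3_conf :: "dir \<Rightarrow> nat \<Rightarrow> nat \<Rightarrow> nat \<Rightarrow> conf" where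
  "stage3_conf e p k q = (if e = R
     then replicate p Bl @ Vac # alternating Wh Bl k @ replicate q Bl
     else replicate p Bl @ alternating Wh Bl k @ Vac # replicate q Bl)"

lemma runs_legally_stage2:
  "runs_legally (stage2 m d) (stage1_conf (dir_after d m) p m 0) (stage3_conf (dir_after d m) p m 0)"
proof (cases "dir_after d m")
  case R
  then show ?thesis
    using runs_legally_Jumps_R[of "replicate p Bl" Bl Wh m "[]"]
    by (simp add: stage2_def stage1_conf_def stage3_conf_def)
next
  case L
  then show ?thesis
    using runs_legally_Jumps_L[of "replicate p Bl" Bl Wh m "[]"]
    by (simp add: stage2_def stage1_conf_def stage3_conf_def)
qed

lemma runs_legally_stage3_round:
  assumes "0 < k"
  shows "runs_legally (Slide R # replicate k (Jump (change e)))
           (stage3_conf e (Suc p) k q) (stage3_conf (change e) p k (Suc q))"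
proof (cases e)
  case R
  have "runs_legally [Slide R] (stage3_conf R (Suc p) k q)
          (replicate p Bl @ Vac # alternating Bl Wh k @ Bl # replicate q Bl)"
    using runs_legally_Slide_R[of "replicate p Bl" Bl "alternating Wh Bl k @ replicate q Bl"]
    by (simp add: stage3_conf_def replicate_app_Cons_same Cons_alternating_append)
  moreover have "runs_legally (replicate k (Jump L))
      (replicate p Bl @ Vac # alternating Bl Wh k @ Bl # replicate q Bl) (stage3_conf L p k (Suc q))"
    using runs_legally_Jumps_L[of "replicate p Bl" Bl Wh k "Bl # replicate q Bl"]
    by (simp add: stage3_conf_def)
  ultimately show ?thesis
    using R runs_legally_append by fastforce
next
  case L
  obtain k' where k': "k = Suc k'"
    using assms by (cases k) auto
  have "stage3_conf L (Suc p) k q = (replicate p Bl @ alternating Bl Wh k) @ Bl # Vac # replicate q Bl"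
    by (simp add: stage3_conf_def k' replicate_append_alternating alternating_Suc_snoc[of Wh Bl])
  then have "runs_legally [Slide R] (stage3_conf L (Suc p) k q)
          ((replicate p Bl @ alternating Bl Wh k) @ Vac # Bl # replicate q Bl)"
    by (simp only:) (rule runs_legally_Slide_R; simp)
  moreover have "runs_legally (replicate k (Jump R))
      ((replicate p Bl @ alternating Bl Wh k) @ Vac # Bl # replicate q Bl) (stage3_conf R p k (Suc q))"
    using runs_legally_Jumps_R[of "replicate p Bl" Bl Wh k "Bl # replicate q Bl"]
    by (simp add: stage3_conf_def)
  ultimately show ?thesis
    using L runs_legally_append by fastforce
qed

lemma runs_legally_stage3:
  assumes "1 \<le> m" "m \<le> n"
  shows "runs_legally (stage3 n m d)
           (stage3_conf (dir_after d m) (n - m) m 0) (stage3_conf (dir_after d n) 0 m (n - m))"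
proof -
  let ?C = "\<lambda>k. stage3_conf (dir_after d (m + k)) (n - m - k) m k"
  have "runs_legally (stage3 n m d) (?C 0) (?C (n - m))"
    unfolding stage3_eq
  proof (rule runs_legally_concat_upt)
    fix k assume "k < n - m"
    then show "runs_legally (Slide R # replicate m (Jump (dir_after d (m + Suc k))))
                 (?C k) (?C (Suc k))"
      using runs_legally_stage3_round[of m "dir_after d (m + k)" "n - m - Suc k" k] assms
      by (simp add: Suc_diff_Suc dir_after_Suc)
  qed
  then show ?thesis
    using assms by simp
qed

definition stage4_conf :: "dir \<Rightarrow> nat \<Rightarrow> nat \<Rightarrow> nat \<Rightarrow> conf" where
  "stage4_conf e q k p = (if e = R
     then replicate q Wh @ Vac # alternating Wh Bl k @ replicate p Bl
     else replicate q Wh @ alternating Wh Bl k @ Vac # replicate p Bl)"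

lemma runs_legally_stage4_round:
  "runs_legally (Slide (change e) # replicate k (Jump (change e)))
     (stage4_conf e q (Suc k) p) (stage4_conf (change e) (Suc q) k (Suc p))"
proof (cases e)
  case R
  have "runs_legally [Slide L] (stage4_conf R q (Suc k) p)
          ((Wh # replicate q Wh) @ Vac # alternating Bl Wh k @ Bl # replicate p Bl)"
    using runs_legally_Slide_L[of "replicate q Wh" Wh "Bl # alternating Wh Bl k @ replicate p Bl"]
    by (simp add: stage4_conf_def alternating_Suc replicate_app_Cons_same Cons_alternating_append)
  moreover have "runs_legally (replicate k (Jump L))
      ((Wh # replicate q Wh) @ Vac # alternating Bl Wh k @ Bl # replicate p Bl)
      (stage4_conf L (Suc q) k (Suc p))"
    using runs_legally_Jumps_L[of "Wh # replicate q Wh" Bl Wh k "Bl # replicate p Bl"]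
    by (simp add: stage4_conf_def)
  ultimately show ?thesis
    using R runs_legally_append by fastforce
next
  case L
  have "stage4_conf L q (Suc k) p =
          ((Wh # replicate q Wh) @ alternating Bl Wh k) @ Bl # Vac # replicate p Bl"
    by (simp add: stage4_conf_def alternating_Suc_snoc replicate_app_Cons_same
        flip: Cons_alternating_append)
  then have "runs_legally [Slide R] (stage4_conf L q (Suc k) p)
          (((Wh # replicate q Wh) @ alternating Bl Wh k) @ Vac # Bl # replicate p Bl)"
    by (simp only:) (rule runs_legally_Slide_R; simp)
  moreover have "runs_legally (replicate k (Jump R))
      (((Wh # replicate q Wh) @ alternating Bl Wh k) @ Vac # Bl # replicate p Bl)
      (stage4_conf R (Suc q) k (Suc p))"
    using runs_legally_Jumps_R[of "Wh # replicate q Wh" Bl Wh k "Bl # replicate p Bl"]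
    by (simp add: stage4_conf_def)
  ultimately show ?thesis
    using L runs_legally_append by fastforce
qed

lemma stage4_conf_final: "stage4_conf e m 0 n = final_conf n m"
  by (simp add: stage4_conf_def final_conf_def)

lemma runs_legally_stage4:
  assumes "m \<le> n"
  shows "runs_legally (stage4 n m d) (stage4_conf (dir_after d n) 0 m (n - m)) (final_conf n m)"
proof -
  let ?C = "\<lambda>k. stage4_conf (dir_after d (n + m - k)) (m - k) k (n - k)"
  have "runs_legally (stage4 n m d) (?C m) (?C 0)"
    unfolding stage4_eq
  proof (rule runs_legally_concat_rev_upt)
    fix k assume k: "k < m"
    then have "n + m - k = Suc (n + m - Suc k)"
      by simp
    then have "dir_after d (n + m - k) = change (dir_after d (n + m - Suc k))"
      by (simp only: dir_after_Suc)
    then show "runs_legally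
                 (Slide (dir_after d (n + m - k)) # replicate k (Jump (dir_after d (n + m - k))))
                 (?C (Suc k)) (?C k)"
      using runs_legally_stage4_round[of "dir_after d (n + m - Suc k)" k "m - Suc k" "n - Suc k"]
        k assms
      by (simp add: Suc_diff_Suc)
  qed
  then show ?thesis
    using assms by (simp add: stage4_conf_final)
qed

lemma stage3_conf_eq_stage4_conf: "stage3_conf e 0 k q = stage4_conf e 0 k q"
  by (simp add: stage3_conf_def stage4_conf_def)

lemma runs_legally_move:
  assumes "1 \<le> m" "m \<le> n"
  shows "runs_legally (move n m d) (init_conf n m) (final_conf n m)"
  unfolding move_def
  using runs_legally_stage1[OF assms(2)] runs_legally_stage2 runs_legally_stage3[OF assms]
    runs_legally_stage4[OF assms(2)]
  by (auto simp: stage3_conf_eq_stage4_conf intro!: runs_legally_append)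

lemma two_sum_list_map_Suc_upt: "2 * sum_list (map Suc [0..<m]) = m * Suc m"
  by (induction m) auto

lemma length_stage1: "length (stage1 m d) = sum_list (map Suc [0..<m])"
  unfolding stage1_eq length_concat map_map by (simp add: comp_def)

lemma length_stage2: "length (stage2 m d) = m"
  by (simp add: stage2_def)

lemma length_stage3: "length (stage3 n m d) = (n - m) * Suc m"
  unfolding stage3_eq length_concat map_map
  by (simp add: comp_def map_replicate_const sum_list_replicate)

lemma length_stage4: "length (stage4 n m d) = sum_list (map Suc [0..<m])"
  unfolding stage4_eq length_concat map_map by (simp add: comp_def flip: rev_map)

lemma length_move:
  assumes "m \<le> n"
  shows "length (move n m d) = n * m + n + m"
proof -
  have "(n - m) * Suc m + m * Suc m = n * Suc m"
    using assms by (simp flip: add_mult_distrib)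
  then have "2 * length (move n m d) = 2 * (n * m + n + m)"
    using two_sum_list_map_Suc_upt[of m]
    by (simp add: move_def length_stage1 length_stage2 length_stage3 length_stage4)
  then show ?thesis
    by simp
qed

section \<open>Optimality\<close>

lemma count_list_replicate: "count_list (replicate n x) y = (if x = y then n else 0)"
  by (induction n) auto

fun inversions :: "cell list \<Rightarrow> nat" where
  "inversions [] = 0"
| "inversions (x # xs) = (if x = Bl then count_list xs Wh else 0) + inversions xs"

lemma inversions_append:
  "inversions (xs @ ys) = inversions xs + inversions ys + count_list xs Bl * count_list ys Wh"
  by (induction xs) (auto simp: algebra_simps)

text \<open>The score of a black checker in \<open>zs\<close> at index \<open>i\<close> that has a white checker to its
  right is the number of black checkers to its left plus the number of white checkers to its right,
  plus one if \<open>k + i\<close> is odd; \<open>b\<close> and \<open>w\<close> count the black checkers left of \<open>zs\<close> and the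
  white checkers right of \<open>zs\<close>.\<close>

fun max_black_score :: "cell list \<Rightarrow> nat \<Rightarrow> nat \<Rightarrow> nat \<Rightarrow> nat" where
  "max_black_score [] b w k = 0"
| "max_black_score (z # zs) b w k = max
     (if z = Bl \<and> 0 < count_list zs Wh + w then b + count_list zs Wh + w + of_bool (odd k) else 0)
     (max_black_score zs (if z = Bl then Suc b else b) w (Suc k))"

lemma max_black_score_append:
  "max_black_score (xs @ ys) b w k =
     max (max_black_score xs b (count_list ys Wh + w) k)
         (max_black_score ys (b + count_list xs Bl) w (k + length xs))"
  by (induction xs arbitrary: b k) (auto simp: max.assoc add.assoc)

lemma max_black_score_Suc_Suc: "max_black_score zs b w (Suc (Suc k)) = max_black_score zs b w k"
  by (induction zs arbitrary: b k) auto

lemma max_black_score_Suc_index: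
  "max_black_score zs b w (Suc k) \<le> max_black_score zs b w k + 1 \<and>
   max_black_score zs b w k \<le> max_black_score zs b w (Suc k) + 1"
proof (induction zs arbitrary: b k)
  case (Cons z zs)
  from Cons[of "if z = Bl then Suc b else b" "Suc k"] show ?case
    by (auto simp: max_def)
qed simp

lemma max_black_score_no_Bl: "Bl \<notin> set zs \<Longrightarrow> max_black_score zs b w k = 0"
  by (induction zs arbitrary: b k) auto

lemma max_black_score_no_Wh: "Wh \<notin> set zs \<Longrightarrow> max_black_score zs b 0 k = 0"
  by (induction zs arbitrary: b k) (auto simp: count_list_0_iff)

lemma add_count_Bl_le_max_black_score_Suc:
  "0 < w \<Longrightarrow> Bl \<in> set xs \<Longrightarrow> b + count_list xs Bl + w \<le> max_black_score xs b w k + 1"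
proof (induction xs arbitrary: w rule: rev_induct)
  case (snoc z xs)
  show ?case
  proof (cases "z = Bl")
    case False
    then have "Bl \<in> set xs"
      using snoc.prems by simp
    from snoc.IH[OF _ this, of "count_list [z] Wh + w"] snoc.prems False show ?thesis
      by (simp add: max_black_score_append)
  qed (use snoc.prems in \<open>simp add: max_black_score_append\<close>)
qed simp

lemma add_count_Bl_le_max_black_score:
  assumes "Vac \<notin> set xs" "0 < w" "Bl \<in> set xs" "even (k + length xs)"
  shows "b + count_list xs Bl + w \<le> max_black_score xs b w k"
proof (cases xs rule: rev_cases)
  case (snoc ys z)
  show ?thesis
  proof (cases "z = Bl")
    case False
    then have "Bl \<in> set ys" "z = Wh"
      using assms snoc by (auto intro: cell.exhaust)
    with add_count_Bl_le_max_black_score_Suc[OF _ this(1), of "count_list [z] Wh + w" b k] snoc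
    show ?thesis
      by (simp add: max_black_score_append)
  qed (use assms snoc in \<open>simp add: max_black_score_append\<close>)
qed (use assms in simp)

definition slide_potential :: "cell list \<Rightarrow> cell list \<Rightarrow> nat" where
  "slide_potential xs ys = max (of_bool (odd (length xs + count_list (xs @ ys) Wh)))
     (max (max_black_score xs 0 (count_list ys Wh) (length xs))
          (max_black_score ys (count_list xs Bl) 0 0))"

lemma max_le_max_plus_1: "(a::nat) \<le> a' + 1 \<Longrightarrow> b \<le> b' + 1 \<Longrightarrow> max a b \<le> max a' b' + 1"
  by (auto simp: max_def)

lemma slide_potential_slide:
  assumes "a \<noteq> Vac"
  shows "slide_potential (xs @ [a]) ys \<le> slide_potential xs (a # ys) + 1 \<and>
         slide_potential xs (a # ys) \<le> slide_potential (xs @ [a]) ys + 1"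
proof -
  let ?w = "count_list (a # ys) Wh" and ?b = "count_list (xs @ [a]) Bl"
  let ?p = "length xs + count_list xs Wh + ?w"
  have index_shift:
    "max_black_score xs 0 ?w (Suc (length xs)) \<le> max_black_score xs 0 ?w (length xs) + 1 \<and>
     max_black_score xs 0 ?w (length xs) \<le> max_black_score xs 0 ?w (Suc (length xs)) + 1"
    "max_black_score ys ?b 0 (Suc 0) \<le> max_black_score ys ?b 0 0 + 1 \<and>
     max_black_score ys ?b 0 0 \<le> max_black_score ys ?b 0 (Suc 0) + 1"
    by (rule max_black_score_Suc_index)+
  let ?t = "if a = Bl \<and> 0 < count_list ys Wh then count_list xs Bl + count_list ys Wh else 0"
  have "length (xs @ [a]) + count_list ((xs @ [a]) @ ys) Wh = Suc ?p"
    by simp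
  moreover have "max_black_score (xs @ [a]) 0 (count_list ys Wh) (length (xs @ [a])) =
      max (max_black_score xs 0 ?w (Suc (length xs))) (if ?t = 0 then 0 else ?t + 1)"
    using assms by (cases a) (simp_all add: max_black_score_append)
  ultimately have left: "slide_potential (xs @ [a]) ys = max (of_bool (odd (Suc ?p)))
      (max (max (max_black_score xs 0 ?w (Suc (length xs))) (if ?t = 0 then 0 else ?t + 1))
           (max_black_score ys ?b 0 0))"
    unfolding slide_potential_def by (simp only:)
  have "length xs + count_list (xs @ a # ys) Wh = ?p"
    by simp
  moreover have "max_black_score (a # ys) (count_list xs Bl) 0 0 =
      max ?t (max_black_score ys ?b 0 (Suc 0))"
    using assms by (cases a) simp_all
  ultimately have right: "slide_potential xs (a # ys) = max (of_bool (odd ?p))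
      (max (max_black_score xs 0 ?w (length xs)) (max ?t (max_black_score ys ?b 0 (Suc 0))))"
    unfolding slide_potential_def by (simp only:)
  show ?thesis
    unfolding left right max.assoc
    by (intro conjI max_le_max_plus_1) (use index_shift in auto)
qed

lemma Suc_count_Bl_le_max_parity_black_score:
  assumes "Vac \<notin> set xs"
  shows "count_list xs Bl + 1 \<le>
           max (of_bool (odd (length xs + count_list xs Wh + 1)))
               (max_black_score xs 0 1 (length xs))"
proof (cases "Bl \<in> set xs")
  case True
  from add_count_Bl_le_max_black_score[OF assms _ True, of 1 "length xs" 0] show ?thesis
    by simp
next
  case False
  then have "\<forall>x\<in>set xs. x = Wh"
    using assms by (metis cell.exhaust)
  then have "count_list xs Wh = length xs"
    by (induction xs) auto
  moreover have "count_list xs Bl = 0"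
    using False by (simp add: count_list_0_iff)
  ultimately show ?thesis
    by simp
qed

lemma max_max_cong_bounded:
  fixes p x u v y :: nat
  assumes "u \<le> max p (max x v)" "v \<le> max p (max x u)"
  shows "max p (max x (max u y)) = max p (max x (max v y))"
  using assms by (auto simp: max_def split: if_splits)

lemma slide_potential_jump:
  assumes "Vac \<notin> set xs" "a \<noteq> Vac" "b \<noteq> Vac"
  shows "slide_potential (xs @ [a, b]) ys = slide_potential xs (b # a # ys)"
proof -
  let ?bx = "count_list xs Bl" and ?wy = "count_list ys Wh"
  define P :: nat
    where "P = of_bool (odd (length xs + count_list xs Wh + count_list [a, b] Wh + ?wy))"
  define X where "X = max_black_score xs 0 (count_list [a, b] Wh + ?wy) (length xs)"
  let ?Y = "max_black_score ys (?bx + count_list [a, b] Bl) 0 0"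
  let ?left_a =
    "if a = Bl \<and> 0 < count_list [b] Wh + ?wy then ?bx + count_list [b] Wh + ?wy else 0"
  let ?left_b = "if b = Bl \<and> 0 < ?wy then ?bx + count_list [a] Bl + ?wy + 1 else 0"
  let ?right_b =
    "if b = Bl \<and> 0 < count_list [a] Wh + ?wy then ?bx + count_list [a] Wh + ?wy else 0"
  let ?right_a = "if a = Bl \<and> 0 < ?wy then ?bx + count_list [b] Bl + ?wy + 1 else 0"
  have "length (xs @ [a, b]) + count_list ((xs @ [a, b]) @ ys) Wh =
          Suc (Suc (length xs + count_list xs Wh + count_list [a, b] Wh + ?wy))"
    by simp
  moreover have "max_black_score (xs @ [a, b]) 0 ?wy (length (xs @ [a, b])) =
      max X (max ?left_a ?left_b)"
    unfolding X_def using assms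
    by (cases a; cases b) (simp_all add: max_black_score_append max_black_score_Suc_Suc)
  moreover have "count_list (xs @ [a, b]) Bl = ?bx + count_list [a, b] Bl"
    by (rule count_list_append)
  ultimately have left:
      "slide_potential (xs @ [a, b]) ys = max P (max X (max (max ?left_a ?left_b) ?Y))"
    unfolding slide_potential_def P_def X_def by (simp only: even_Suc_Suc_iff max.assoc)
  have "length xs + count_list (xs @ b # a # ys) Wh =
          length xs + count_list xs Wh + count_list [a, b] Wh + ?wy"
    by simp
  moreover have "count_list (b # a # ys) Wh = count_list [a, b] Wh + ?wy"
    by simp
  moreover have "max_black_score (b # a # ys) ?bx 0 0 = max (max ?right_b ?right_a) ?Y"
    using assms by (cases a; cases b) (simp_all add: max_black_score_Suc_Suc max.assoc)
  ultimately have right: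
      "slide_potential xs (b # a # ys) = max P (max X (max (max ?right_b ?right_a) ?Y))"
    unfolding slide_potential_def P_def X_def by (simp only:)
  txt \<open>The jump exchanges the scores of \<open>a\<close> and \<open>b\<close>. A score can only appear or disappear
    when no white checker lies right of the pair; then it equals \<open>?bx + 1\<close>, which is dominated.\<close>
  have key: "?bx + 1 \<le> max P X" if "?wy = 0" "count_list [a, b] Wh = 1"
    using Suc_count_Bl_le_max_parity_black_score[OF assms(1)] that by (simp add: P_def X_def)
  have "max ?left_a ?left_b \<le> max P (max X (max ?right_b ?right_a)) \<and>
        max ?right_b ?right_a \<le> max P (max X (max ?left_a ?left_b))"
    using assms key by (cases a; cases b; cases "?wy = 0") auto
  then show ?thesis
    unfolding left right by (intro max_max_cong_bounded) auto
qed

definition potential :: "cell list \<Rightarrow> cell list \<Rightarrow> nat" where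
  "potential xs ys = inversions (xs @ Vac # ys) + slide_potential xs ys"

lemma inversions_slide: "inversions (xs @ Vac # a # ys) = inversions ((xs @ [a]) @ Vac # ys)"
  by (cases a) (simp_all add: inversions_append)

lemma inversions_jump_left:
  "inversions (xs @ Vac # a # b # ys) \<le> inversions ((xs @ [b, a]) @ Vac # ys) + 1"
  by (cases a; cases b) (simp_all add: inversions_append)

lemma inversions_jump_right:
  "inversions ((xs @ [a, b]) @ Vac # ys) \<le> inversions (xs @ Vac # b # a # ys) + 1"
  by (cases a; cases b) (simp_all add: inversions_append)

lemma legal_move_split_cases:
  assumes "legal_move (xs @ Vac # ys) c'" "Vac \<notin> set xs" "Vac \<notin> set ys"
  obtains (slide_left) a ys' where "ys = a # ys'" "c' = (xs @ [a]) @ Vac # ys'"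
  | (slide_right) xs' a where "xs = xs' @ [a]" "c' = xs' @ Vac # a # ys"
  | (jump_left) a b ys' where "ys = a # b # ys'" "c' = (xs @ [b, a]) @ Vac # ys'"
  | (jump_right) xs' a b where "xs = xs' @ [a, b]" "c' = xs' @ Vac # b # a # ys"
proof -
  let ?c = "xs @ Vac # ys"
  obtain p q where pq: "p < length ?c" "q < length ?c" "?c ! p = Vac"
     "q = p + 1 \<or> p = q + 1 \<or> q = p + 2 \<or> p = q + 2" "c' = ?c[p := ?c ! q, q := Vac]"
    using assms(1) unfolding legal_move_def by blast
  have p: "p = length xs"
  proof (rule ccontr)
    assume "p \<noteq> length xs"
    then have "?c ! p \<in> set xs \<union> set ys"
      using pq(1) by (auto simp: nth_append nth_Cons' split: if_splits)
    then show False
      using pq(3) assms(2,3) by auto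
  qed
  from pq(4) show thesis
  proof (elim disjE)
    assume "q = p + 1"
    then obtain a ys' where "ys = a # ys'"
      using pq(2) p by (cases ys) auto
    then show thesis
      using slide_left pq(5) p \<open>q = p + 1\<close> by (simp add: nth_append list_update_append)
  next
    assume "p = q + 1"
    then obtain xs' a where "xs = xs' @ [a]"
      using p by (cases xs rule: rev_cases) auto
    then show thesis
      using slide_right pq(5) p \<open>p = q + 1\<close> by (simp add: nth_append list_update_append)
  next
    assume "q = p + 2"
    then obtain a b ys' where "ys = a # b # ys'"
      using pq(2) p by (cases ys rule: remdups_adj.cases) auto
    then show thesis
      using jump_left pq(5) p \<open>q = p + 2\<close> by (simp add: nth_append list_update_append)
  next
    assume "p = q + 2"
    then obtain xs1 b where xs1: "xs = xs1 @ [b]"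
      using p by (cases xs rule: rev_cases) auto
    then obtain xs' a where "xs1 = xs' @ [a]"
      using p \<open>p = q + 2\<close> by (cases xs1 rule: rev_cases) auto
    with xs1 show thesis
      using jump_right pq(5) p \<open>p = q + 2\<close> by (simp add: nth_append list_update_append)
  qed
qed

lemma potential_legal_move:
  assumes "legal_move (xs @ Vac # ys) c'" "Vac \<notin> set xs" "Vac \<notin> set ys"
  obtains xs' ys' where "c' = xs' @ Vac # ys'" "Vac \<notin> set xs'" "Vac \<notin> set ys'"
    "potential xs ys \<le> potential xs' ys' + 1"
  using assms(1-3)
proof (cases rule: legal_move_split_cases)
  case (slide_left a ys')
  then show thesis
    using that[of "xs @ [a]" ys'] assms(2,3) slide_potential_slide[of a xs ys']
    by (auto simp: potential_def inversions_slide)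
next
  case (slide_right xs' a)
  then show thesis
    using that[of xs' "a # ys"] assms(2,3) slide_potential_slide[of a xs' ys]
    by (auto simp: potential_def inversions_slide)
next
  case (jump_left a b ys')
  then show thesis
    using that[of "xs @ [b, a]" ys'] assms(2,3) slide_potential_jump[of xs b a ys']
      inversions_jump_left[of xs a b ys']
    by (auto simp: potential_def)
next
  case (jump_right xs' a b)
  then show thesis
    using that[of xs' "b # a # ys"] assms(2,3) slide_potential_jump[of xs' a b ys]
      inversions_jump_right[of xs' a b ys]
    by (auto simp: potential_def)
qed

lemma potential_relpowp_legal_move:
  assumes "(legal_move ^^ k) (xs @ Vac # ys) (xs' @ Vac # ys')"
    "Vac \<notin> set xs" "Vac \<notin> set ys" "Vac \<notin> set xs'"
  shows "potential xs ys \<le> potential xs' ys' + k"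
  using assms(1-3)
proof (induction k arbitrary: xs ys)
  case 0
  then have "xs = xs' \<and> ys = ys'"
    using append_Cons_eq_iff[of Vac xs ys xs' ys'] assms(4) by simp
  then show ?case
    by simp
next
  case (Suc k)
  obtain c where "legal_move (xs @ Vac # ys) c" "(legal_move ^^ k) c (xs' @ Vac # ys')"
    using relpowp_Suc_D2[OF Suc.prems(1)] by blast
  moreover obtain xs1 ys1 where "c = xs1 @ Vac # ys1" "Vac \<notin> set xs1" "Vac \<notin> set ys1"
      "potential xs ys \<le> potential xs1 ys1 + 1"
    using potential_legal_move[OF calculation(1) Suc.prems(2,3)] by blast
  ultimately show ?case
    using Suc.IH[of xs1 ys1] by simp
qed

lemma inversions_replicate: "inversions (replicate n x) = 0"
  by (induction n) (auto simp: count_list_replicate)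

lemma potential_init:
  assumes "1 \<le> n" "1 \<le> m"
  shows "n * m + n + m \<le> potential (replicate n Bl) (replicate m Wh)"
proof -
  have "n + m \<le> max_black_score (replicate n Bl) 0 m n"
    using add_count_Bl_le_max_black_score[of "replicate n Bl" m n 0] assms
    by (simp add: count_list_replicate)
  then have "n + m \<le> slide_potential (replicate n Bl) (replicate m Wh)"
    by (simp add: slide_potential_def count_list_replicate)
  then show ?thesis
    by (simp add: potential_def inversions_append inversions_replicate count_list_replicate)
qed

lemma potential_final: "potential (replicate m Wh) (replicate n Bl) = 0"
  by (simp add: potential_def slide_potential_def inversions_append inversions_replicate
      count_list_replicate max_black_score_no_Bl max_black_score_no_Wh)

lemma legal_moves_lower_bound:
  assumes "1 \<le> n" "1 \<le> m" "(legal_move ^^ k) (init_conf n m) (final_conf n m)"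
  shows "n * m + n + m \<le> k"
proof -
  have "potential (replicate n Bl) (replicate m Wh) \<le> potential (replicate m Wh) (replicate n Bl) + k"
    using assms(3) by (intro potential_relpowp_legal_move) (simp_all add: init_conf_def final_conf_def)
  then show ?thesis
    using potential_init[OF assms(1,2)] potential_final[of m n] by simp
qed

theorem theorem2:
  fixes n m :: nat and d :: dir
  assumes "1 \<le> m" and "m \<le> n"
  shows "(\<exists>tr. run (move n m d) (init_conf n m) = Some tr
            \<and> (\<forall>i. i + 1 < length tr \<longrightarrow> legal_move (tr ! i) (tr ! (i + 1)))
            \<and> last tr = final_conf n m)
         \<and> length (move n m d) = n * m + n + m
         \<and> (\<forall>k. (legal_move ^^ k) (init_conf n m) (final_conf n m) \<longrightarrow> n * m + n + m \<le> k)"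
proof (intro conjI allI impI)
  show "\<exists>tr. run (move n m d) (init_conf n m) = Some tr
            \<and> (\<forall>i. i + 1 < length tr \<longrightarrow> legal_move (tr ! i) (tr ! (i + 1)))
            \<and> last tr = final_conf n m"
    using runs_legally_move[OF assms, of d] by (simp add: runs_legally_def successively_iff_nth)
  show "length (move n m d) = n * m + n + m"
    using length_move[OF assms(2)] .
  fix k
  assume "(legal_move ^^ k) (init_conf n m) (final_conf n m)"
  then show "n * m + n + m \<le> k"
    using legal_moves_lower_bound assms by simp
qed

end
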